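(* Let $q>0$, $q\neq1$, and $s\in(0,1)$ with $s^2>1/(1+\sqrt{q})$. For $\eta=(\eta_1,\eta_2)=(\cos\theta_\eta,\sin\theta_\eta)\in\mathbb{S}^1$, let $\mathcal{T}_1\theta_\eta$, $\mathcal{T}_2\theta_\eta$ be the two solutions $\theta_\xi$ (with $\xi=(\xi_1,\xi_2)=(\cos\theta_\xi,\sin\theta_\xi)$) of $$\sqrt{q}\,(\eta_1\xi_2-s^2\eta_2\xi_1)+(1-s^2)\xi_1\xi_2=0,$$ ordered so that $\operatorname{sgn}\cos\theta_\eta=\operatorname{sgn}\cos\mathcal{T}_1\theta_\eta=-\operatorname{sgn}\cos\mathcal{T}_2\theta_\eta$ and $\operatorname{sgn}\sin\theta_\eta=\operatorname{sgn}\sin\mathcal{T}_1\theta_\eta=-\operatorname{sgn}\sin\mathcal{T}_2\theta_\eta$. Then: (a) $\mathcal{T}_j(\theta_\eta+\pi)=\mathcal{T}_j\theta_\eta+\pi$ (mod $2\pi$) for $j=1,2$; (b) for $j=1,2$, with $\xi_1=\cos\mathcal{T}_j\theta_\eta$, $\xi_2=\sin\mathcal{T}_j\theta_\eta$, whenever $\eta_1\eta_2\neq0$, $$\frac{|\eta_1|}{|\xi_1|}-s^2\frac{|\eta_2|}{|\xi_2|}=(-1)^j\frac{1-s^2}{\sqrt{q}};$$ (c) $|\cos\mathcal{T}_2\theta_\eta|<|\cos\mathcal{T}_1\theta_\eta|$ whenever $\eta_1\eta_2\neq0$.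
   Context: Angles are taken modulo $2\pi$. It is a known fact (used as the setting here) that under the condition $s^2>1/(1+\sqrt{q})$ the displayed equation has, for each $\eta\in\mathbb{S}^1$, exactly two solutions $\theta_\xi\in\mathbb{R}/(2\pi\mathbb{Z})$, and they can be ordered as stated; moreover $|\cos\theta_\eta|\le|\cos\mathcal{T}_1\theta_\eta|$, and $|\cos\theta_\eta|\le|\cos\mathcal{T}_2\theta_\eta|\le|\cos\theta_\eta|/s^2$ if $q>1$, $|\cos\theta_\eta|\ge|\cos\mathcal{T}_2\theta_\eta|$ if $0<q<1$, and $\mathcal{T}_1\theta_\eta=\theta_\eta$ iff $\mathcal{T}_2\theta_\eta=\theta_\eta+\pi$ iff $\theta_\eta\in\{0,\pi/2,\pi,3\pi/2\}$. (This arises from stationary points for the ellipse $(x_1/a)^2+(x_2/b)^2<1$, $s=b/a$.) *)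

theory Defs
  imports Complex_Main
begin

definition stat_eq :: "real \<Rightarrow> real \<Rightarrow> real \<Rightarrow> real \<Rightarrow> bool" where
  "stat_eq q s th ph \<longleftrightarrow>
     sqrt q * (cos th * sin ph - s\<^sup>2 * sin th * cos ph) + (1 - s\<^sup>2) * cos ph * sin ph = 0"

definition angle_cong :: "real \<Rightarrow> real \<Rightarrow> bool" where
  "angle_cong a b \<longleftrightarrow> (\<exists>k::int. a = b + 2 * pi * of_int k)"

end

theory Submission
  imports Defs
begin

text \<open>
  For \<open>\<eta>\<close> off the axes, dividing the equation by \<open>\<xi>\<^sub>1\<xi>\<^sub>2\<close> and taking the sign
  conventions into account gives the balance law (b), with right-hand side \<open>\<mp>(1 - s\<^sup>2)/\<surd>q\<close>
  according to whether \<open>\<xi>\<close> lies in the quadrant of \<open>\<eta>\<close> or in the opposite one. Along the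
  unit circle the left-hand side is strictly decreasing in \<open>|\<xi>\<^sub>1|\<close>, so within a quadrant
  the solution is unique (on the axes the signs pin it down). Uniqueness gives (a), since
  \<open>\<xi> \<mapsto> -\<xi>\<close> maps solutions for \<open>\<eta>\<close> to solutions for \<open>-\<eta>\<close>, and comparing the two values
  of the balance gives (c). The hypotheses \<open>q \<noteq> 1\<close> and \<open>s\<^sup>2 > 1/(1 + \<surd>q)\<close> only serve to
  make \<open>\<T>\<^sub>1\<close>, \<open>\<T>\<^sub>2\<close> exist, which is assumed here, so the proof does not use them.
\<close>

lemma angle_cong_iff: "angle_cong a b \<longleftrightarrow> sin a = sin b \<and> cos a = cos b"
  unfolding angle_cong_def by (simp add: sin_cos_eq_iff mult.assoc)

lemma abs_cos_less_iff_abs_sin_less: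
  fixes a b :: real
  shows "\<bar>cos a\<bar> < \<bar>cos b\<bar> \<longleftrightarrow> \<bar>sin b\<bar> < \<bar>sin a\<bar>"
proof -
  have "\<bar>cos a\<bar> < \<bar>cos b\<bar> \<longleftrightarrow> (cos a)\<^sup>2 < (cos b)\<^sup>2"
    using abs_le_square_iff[of "cos b" "cos a"] by linarith
  also have "\<dots> \<longleftrightarrow> (sin b)\<^sup>2 < (sin a)\<^sup>2"
    using sin_cos_squared_add[of a] sin_cos_squared_add[of b] by linarith
  also have "\<dots> \<longleftrightarrow> \<bar>sin b\<bar> < \<bar>sin a\<bar>"
    using abs_le_square_iff[of "sin a" "sin b"] by linarith
  finally show ?thesis .
qed

lemma angle_cong_of_same_signs_abs_cos_eq:
  assumes "sgn (cos a) = sgn (cos b)" "sgn (sin a) = sgn (sin b)" "\<bar>cos a\<bar> = \<bar>cos b\<bar>"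
  shows "angle_cong a b"
proof -
  have "\<bar>sin a\<bar> = \<bar>sin b\<bar>"
    using assms(3) abs_cos_less_iff_abs_sin_less[of a b] abs_cos_less_iff_abs_sin_less[of b a]
    by linarith
  then show ?thesis
    using assms unfolding angle_cong_iff by (metis sgn_mult_abs)
qed

lemma stat_eq_add_pi: "stat_eq q s (th + pi) (ph + pi) \<longleftrightarrow> stat_eq q s th ph"
  by (simp add: stat_eq_def)

definition balance :: "real \<Rightarrow> real \<Rightarrow> real \<Rightarrow> real" where
  "balance k th ph = \<bar>cos th\<bar> / \<bar>cos ph\<bar> - k * (\<bar>sin th\<bar> / \<bar>sin ph\<bar>)"

lemma balance_strict_antimono:
  assumes "k > 0" "cos th \<noteq> 0" "sin th \<noteq> 0" "cos ph1 \<noteq> 0" "sin ph2 \<noteq> 0"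
    and less: "\<bar>cos ph1\<bar> < \<bar>cos ph2\<bar>"
  shows "balance k th ph2 < balance k th ph1"
proof -
  have "\<bar>sin ph2\<bar> < \<bar>sin ph1\<bar>"
    using less abs_cos_less_iff_abs_sin_less by blast
  then have "\<bar>sin th\<bar> / \<bar>sin ph1\<bar> < \<bar>sin th\<bar> / \<bar>sin ph2\<bar>"
    using assms by (simp add: divide_strict_left_mono)
  moreover have "\<bar>cos th\<bar> / \<bar>cos ph2\<bar> < \<bar>cos th\<bar> / \<bar>cos ph1\<bar>"
    using assms by (simp add: divide_strict_left_mono)
  ultimately show ?thesis
    unfolding balance_def using \<open>k > 0\<close> by (smt (verit) mult_strict_left_mono)
qed

lemma balance_less_iff:
  assumes "k > 0" "cos th \<noteq> 0" "sin th \<noteq> 0"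
    and "cos ph1 \<noteq> 0" "sin ph1 \<noteq> 0" "cos ph2 \<noteq> 0" "sin ph2 \<noteq> 0"
  shows "balance k th ph1 < balance k th ph2 \<longleftrightarrow> \<bar>cos ph2\<bar> < \<bar>cos ph1\<bar>"
proof -
  have "balance k th ph1 = balance k th ph2" if "\<bar>cos ph1\<bar> = \<bar>cos ph2\<bar>"
  proof -
    have "\<bar>sin ph1\<bar> = \<bar>sin ph2\<bar>"
      using that abs_cos_less_iff_abs_sin_less[of ph1 ph2] abs_cos_less_iff_abs_sin_less[of ph2 ph1]
      by linarith
    then show ?thesis
      using that by (simp add: balance_def)
  qed
  then show ?thesis
    using balance_strict_antimono[of k th ph1 ph2] balance_strict_antimono[of k th ph2 ph1] assms
    by (smt (verit))
qed

lemma abs_divide_eq_sign_mult_divide: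
  fixes c x e :: real
  assumes "\<bar>e\<bar> = 1" "c \<noteq> 0" "sgn x = e * sgn c"
  shows "\<bar>c\<bar> / \<bar>x\<bar> = e * (c / x)"
proof -
  have "sgn (c / x) = e"
    using assms by (auto simp: sgn_if zero_less_divide_iff divide_less_0_iff split: if_splits)
  then show ?thesis
    by (metis abs_divide abs_sgn mult.commute)
qed

text \<open>
  The sign \<open>e = \<plusminus>1\<close> says whether \<open>\<xi> = (cos ph, sin ph)\<close> lies in the quadrant of
  \<open>\<eta> = (cos th, sin th)\<close> or in the opposite one.
\<close>

lemma balance_of_stat_eq:
  assumes "q > 0" and sol: "stat_eq q s th ph" and "cos th \<noteq> 0" "sin th \<noteq> 0"
    and e: "\<bar>e\<bar> = 1" and sgn_cos: "sgn (cos ph) = e * sgn (cos th)"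
    and sgn_sin: "sgn (sin ph) = e * sgn (sin th)"
  shows "balance (s\<^sup>2) th ph = - e * ((1 - s\<^sup>2) / sqrt q)"
proof -
  have "cos ph \<noteq> 0" "sin ph \<noteq> 0"
    using assms by (auto simp: sgn_0_0)
  then have "cos th / cos ph - s\<^sup>2 * (sin th / sin ph) = - ((1 - s\<^sup>2) / sqrt q)"
    using sol \<open>q > 0\<close> unfolding stat_eq_def by (simp add: field_simps)
  moreover have "balance (s\<^sup>2) th ph = e * (cos th / cos ph - s\<^sup>2 * (sin th / sin ph))"
    unfolding balance_def
    using abs_divide_eq_sign_mult_divide[OF e \<open>cos th \<noteq> 0\<close> sgn_cos]
      abs_divide_eq_sign_mult_divide[OF e \<open>sin th \<noteq> 0\<close> sgn_sin]
    by (simp add: algebra_simps)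
  ultimately show ?thesis
    by simp
qed

lemma stat_eq_unique_in_quadrant:
  assumes "q > 0" "s \<noteq> 0" and "\<bar>e\<bar> = 1"
    and sol1: "stat_eq q s th ph1"
    and sgn1: "sgn (cos ph1) = e * sgn (cos th)" "sgn (sin ph1) = e * sgn (sin th)"
    and sol2: "stat_eq q s th ph2"
    and sgn2: "sgn (cos ph2) = e * sgn (cos th)" "sgn (sin ph2) = e * sgn (sin th)"
  shows "angle_cong ph1 ph2"
proof (rule angle_cong_of_same_signs_abs_cos_eq)
  show "sgn (cos ph1) = sgn (cos ph2)" "sgn (sin ph1) = sgn (sin ph2)"
    using sgn1 sgn2 by simp_all
  have e0: "e \<noteq> 0"
    using \<open>\<bar>e\<bar> = 1\<close> by auto
  show "\<bar>cos ph1\<bar> = \<bar>cos ph2\<bar>"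
  proof (cases "cos th = 0 \<or> sin th = 0")
    case True
    then have "(cos ph1 = 0 \<and> cos ph2 = 0) \<or> (sin ph1 = 0 \<and> sin ph2 = 0)"
      using sgn1 sgn2 by (auto simp: sgn_0_0)
    then show ?thesis
      using abs_cos_less_iff_abs_sin_less[of ph1 ph2] abs_cos_less_iff_abs_sin_less[of ph2 ph1]
      by auto
  next
    case False
    then have "cos ph1 \<noteq> 0" "sin ph1 \<noteq> 0" "cos ph2 \<noteq> 0" "sin ph2 \<noteq> 0"
      using sgn1 sgn2 e0 by (auto simp: sgn_0_0)
    moreover have "balance (s\<^sup>2) th ph1 = balance (s\<^sup>2) th ph2"
      using balance_of_stat_eq[OF \<open>q > 0\<close> sol1 _ _ \<open>\<bar>e\<bar> = 1\<close> sgn1]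
        balance_of_stat_eq[OF \<open>q > 0\<close> sol2 _ _ \<open>\<bar>e\<bar> = 1\<close> sgn2] False
      by simp
    ultimately show ?thesis
      using balance_less_iff[of "s\<^sup>2" th ph1 ph2] balance_less_iff[of "s\<^sup>2" th ph2 ph1]
        False \<open>s \<noteq> 0\<close>
      by auto
  qed
qed

theorem corollary1:
  fixes q s :: real and T1 T2 :: "real \<Rightarrow> real"
  assumes q_pos: "q > 0" and q_ne1: "q \<noteq> 1"
    and s_range: "0 < s" "s < 1"
    and s_bound: "s\<^sup>2 > 1 / (1 + sqrt q)"
    and T1_sol: "\<And>th. stat_eq q s th (T1 th)"
    and T1_cos: "\<And>th. sgn (cos (T1 th)) = sgn (cos th)"
    and T1_sin: "\<And>th. sgn (sin (T1 th)) = sgn (sin th)"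
    and T2_sol: "\<And>th. stat_eq q s th (T2 th)"
    and T2_cos: "\<And>th. sgn (cos (T2 th)) = - sgn (cos th)"
    and T2_sin: "\<And>th. sgn (sin (T2 th)) = - sgn (sin th)"
  shows "(\<forall>th. angle_cong (T1 (th + pi)) (T1 th + pi) \<and> angle_cong (T2 (th + pi)) (T2 th + pi))
       \<and> (\<forall>th. cos th * sin th \<noteq> 0 \<longrightarrow>
            \<bar>cos th\<bar> / \<bar>cos (T1 th)\<bar> - s\<^sup>2 * (\<bar>sin th\<bar> / \<bar>sin (T1 th)\<bar>) = (-1) ^ 1 * ((1 - s\<^sup>2) / sqrt q)
          \<and> \<bar>cos th\<bar> / \<bar>cos (T2 th)\<bar> - s\<^sup>2 * (\<bar>sin th\<bar> / \<bar>sin (T2 th)\<bar>) = (-1) ^ 2 * ((1 - s\<^sup>2) / sqrt q))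
       \<and> (\<forall>th. cos th * sin th \<noteq> 0 \<longrightarrow> \<bar>cos (T2 th)\<bar> < \<bar>cos (T1 th)\<bar>)"
proof -
  have "s \<noteq> 0" "s\<^sup>2 > 0" and rhs_pos: "(1 - s\<^sup>2) / sqrt q > 0"
    using s_range q_pos by (simp_all add: power_less_one_iff)
  have periodic: "angle_cong (T1 (th + pi)) (T1 th + pi)" "angle_cong (T2 (th + pi)) (T2 th + pi)"
    for th
    using stat_eq_unique_in_quadrant[OF q_pos \<open>s \<noteq> 0\<close>, of 1 "th + pi" "T1 (th + pi)" "T1 th + pi"]
      stat_eq_unique_in_quadrant[OF q_pos \<open>s \<noteq> 0\<close>, of "-1" "th + pi" "T2 (th + pi)" "T2 th + pi"]
    by (simp_all add: stat_eq_add_pi T1_sol T1_cos T1_sin T2_sol T2_cos T2_sin)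
  have balance: "balance (s\<^sup>2) th (T1 th) = (-1) ^ 1 * ((1 - s\<^sup>2) / sqrt q)"
      "balance (s\<^sup>2) th (T2 th) = (-1) ^ 2 * ((1 - s\<^sup>2) / sqrt q)"
    if "cos th * sin th \<noteq> 0" for th
    using that balance_of_stat_eq[OF q_pos T1_sol _ _, of th 1]
      balance_of_stat_eq[OF q_pos T2_sol _ _, of th "-1"]
    by (simp_all add: T1_cos T1_sin T2_cos T2_sin)
  have abs_cos_less: "\<bar>cos (T2 th)\<bar> < \<bar>cos (T1 th)\<bar>" if "cos th * sin th \<noteq> 0" for th
  proof -
    have "sgn (cos (T1 th)) \<noteq> 0" "sgn (sin (T1 th)) \<noteq> 0"
        "sgn (cos (T2 th)) \<noteq> 0" "sgn (sin (T2 th)) \<noteq> 0"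
      using that by (simp_all add: T1_cos T1_sin T2_cos T2_sin sgn_eq_0_iff)
    moreover have "balance (s\<^sup>2) th (T1 th) < balance (s\<^sup>2) th (T2 th)"
      using balance[OF that] rhs_pos by (simp add: diff_divide_distrib)
    ultimately show ?thesis
      unfolding sgn_eq_0_iff using balance_less_iff[of "s\<^sup>2" th "T1 th" "T2 th"] that \<open>s\<^sup>2 > 0\<close>
      by simp
  qed
  show ?thesis
    using periodic balance abs_cos_less unfolding balance_def by simp
qed

end
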